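(* Let $\boldsymbol{d}=\boldsymbol{d}(n)$ be a sequence of graphical degree sequences of length $n$, with $d_1=\max_i d_i$, $M=\sum_i d_i$ and $M_2=\sum_i d_i(d_i-1)$. If $d_1^2=o(M)$ and $M_2\geq M$, then for $G$ chosen uniformly at random from $\mathcal{G}(n,\boldsymbol{d})$, $\mathbb{E}[t(G)]\sim\mu$ as $n\to\infty$, where $\mu=M_2^3/(6M^3)$.
   Context: $\mathcal{G}(n,\boldsymbol{d})$ is the set of labelled simple graphs on $[n]$ with vertex $i$ of degree $d_i$; $t(G)$ is the number of triangles in $G$. Asymptotics are as $n\to\infty$. *)

theory Defs
  imports "HOL-Analysis.Analysis" "HOL-Library.Landau_Symbols"
begin

text \<open>Simple graphs on the vertex set {0..<n} are represented by their edge sets,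
  each edge being a 2-element subset of {0..<n}.\<close>

definition all_edges :: "nat \<Rightarrow> nat set set" where
  "all_edges n = {e. \<exists>i j. i < n \<and> j < n \<and> i \<noteq> j \<and> e = {i, j}}"

definition degree :: "nat set set \<Rightarrow> nat \<Rightarrow> nat" where
  "degree E i = card {e \<in> E. i \<in> e}"

definition graphs_deg :: "nat \<Rightarrow> (nat \<Rightarrow> nat) \<Rightarrow> nat set set set" where
  "graphs_deg n d = {E. E \<subseteq> all_edges n \<and> (\<forall>i<n. degree E i = d i)}"

definition graphical :: "nat \<Rightarrow> (nat \<Rightarrow> nat) \<Rightarrow> bool" where
  "graphical n d \<longleftrightarrow> graphs_deg n d \<noteq> {}"

definition triangles :: "nat set set \<Rightarrow> nat" where
  "triangles E = card {T. \<exists>a b c. a \<noteq> b \<and> b \<noteq> c \<and> a \<noteq> c \<and> T = {a, b, c}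
      \<and> {a, b} \<in> E \<and> {b, c} \<in> E \<and> {a, c} \<in> E}"

definition expected_triangles :: "nat \<Rightarrow> (nat \<Rightarrow> nat) \<Rightarrow> real" where
  "expected_triangles n d =
     (\<Sum>E\<in>graphs_deg n d. real (triangles E)) / real (card (graphs_deg n d))"

definition dmax :: "nat \<Rightarrow> (nat \<Rightarrow> nat) \<Rightarrow> nat" where
  "dmax n d = Max (insert 0 (d ` {..<n}))"

definition M1 :: "nat \<Rightarrow> (nat \<Rightarrow> nat) \<Rightarrow> nat" where
  "M1 n d = (\<Sum>i<n. d i)"

definition M2 :: "nat \<Rightarrow> (nat \<Rightarrow> nat) \<Rightarrow> nat" where
  "M2 n d = (\<Sum>i<n. d i * (d i - 1))"

end

theory Submission
  imports Defs "HOL-Library.Multiset"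
begin

text \<open>
  McKay's switching method. A forward configuration of a graph \<open>G\<close> is an ordered triangle \<open>abc\<close>
  together with three ordered edges \<open>x1y1\<close>, \<open>y2z1\<close>, \<open>z2x2\<close>; switching these six edges
  for the three cherries \<open>x1ax2\<close>, \<open>y1by2\<close>, \<open>z1cz2\<close> preserves all degrees, so the total number
  of forward configurations over \<open>\<G>(n, d)\<close> equals the total number of backward ones.
  Each ordered triangle extends to between \<open>(M - O(d\<^sub>1\<^sup>2))\<^sup>3\<close> and \<open>M\<^sup>3\<close> forward configurations.
  A graph has at most \<open>M\<^sub>2\<^sup>3\<close> backward configurations, and on average at least
  \<open>M\<^sub>2\<^sup>3 (1 - O(d\<^sub>1\<^sup>2/M))\<close>: the defective cherry triples are bounded using the estimate
  \<open>P(ab \<in> G) \<le> d\<^sub>a d\<^sub>b / (M - O(d\<^sub>1\<^sup>2))\<close> from a two-edge switching, and \<open>M\<^sub>2 \<ge> M\<close> makes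
  \<open>\<Sum>d\<^sub>i\<^sup>2 = M\<^sub>2 + M\<close> comparable to \<open>M\<^sub>2\<close>. Hence \<open>6 M\<^sup>3 E t(G) = M\<^sub>2\<^sup>3 (1 + O(d\<^sub>1\<^sup>2/M))\<close>.
\<close>

section \<open>Switchings\<close>

lemma finite_all_edges: "finite (all_edges n)"
proof -
  have "all_edges n \<subseteq> Pow {..<n}" by (auto simp: all_edges_def)
  then show ?thesis by (rule finite_subset) simp
qed

lemma finite_graphs_deg: "finite (graphs_deg n d)"
proof -
  have "graphs_deg n d \<subseteq> Pow (all_edges n)" by (auto simp: graphs_deg_def)
  then show ?thesis by (rule finite_subset) (simp add: finite_all_edges)
qed

definition switchable :: "nat \<Rightarrow> nat set set \<Rightarrow> nat set set \<Rightarrow> bool" where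
  "switchable n A B \<longleftrightarrow> A \<subseteq> all_edges n \<and> B \<subseteq> all_edges n \<and> A \<inter> B = {} \<and>
     (\<forall>i. degree A i = degree B i)"

lemma degree_switch:
  assumes "finite G" "A \<subseteq> G" "B \<inter> G = {}" "finite B"
  shows "degree (G - A \<union> B) i + degree A i = degree G i + degree B i"
proof -
  let ?G = "{e \<in> G. i \<in> e}" and ?A = "{e \<in> A. i \<in> e}" and ?B = "{e \<in> B. i \<in> e}"
  have "{e \<in> G - A \<union> B. i \<in> e} = (?G - ?A) \<union> ?B" by auto
  moreover have "card ?A \<le> card ?G" "card (?G - ?A) = card ?G - card ?A"
    using assms(1,2) finite_subset[OF assms(2,1)] by (auto intro: card_mono card_Diff_subset)
  moreover have "card ((?G - ?A) \<union> ?B) = card (?G - ?A) + card ?B"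
    using assms(1,3,4) by (intro card_Un_disjoint) auto
  ultimately show ?thesis by (simp add: degree_def)
qed

lemma switch_in_graphs_deg:
  assumes "switchable n A B" "G \<in> graphs_deg n d" "A \<subseteq> G" "B \<inter> G = {}"
  shows "G - A \<union> B \<in> graphs_deg n d"
proof -
  have "finite G" "finite B"
    using assms finite_all_edges finite_subset unfolding switchable_def graphs_deg_def by blast+
  then have "degree (G - A \<union> B) i = degree G i" for i
    using assms(1,3,4) degree_switch[of G A B i] by (simp add: switchable_def)
  then show ?thesis
    using assms(1,2) unfolding switchable_def graphs_deg_def by auto
qed

lemma card_switch_eq:
  assumes "switchable n A B"
  shows "card {G \<in> graphs_deg n d. A \<subseteq> G \<and> B \<inter> G = {}} =
         card {G \<in> graphs_deg n d. B \<subseteq> G \<and> A \<inter> G = {}}"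
proof (rule bij_betw_same_card, rule bij_betw_byWitness)
  have BA: "switchable n B A" and AB: "A \<inter> B = {}"
    using assms by (auto simp: switchable_def)
  show "\<forall>G\<in>{G \<in> graphs_deg n d. A \<subseteq> G \<and> B \<inter> G = {}}. G - A \<union> B - B \<union> A = G"
    "\<forall>G\<in>{G \<in> graphs_deg n d. B \<subseteq> G \<and> A \<inter> G = {}}. G - B \<union> A - A \<union> B = G"
    using AB by auto
  show "(\<lambda>G. G - A \<union> B) ` {G \<in> graphs_deg n d. A \<subseteq> G \<and> B \<inter> G = {}}
      \<subseteq> {G \<in> graphs_deg n d. B \<subseteq> G \<and> A \<inter> G = {}}"
    "(\<lambda>G. G - B \<union> A) ` {G \<in> graphs_deg n d. B \<subseteq> G \<and> A \<inter> G = {}}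
      \<subseteq> {G \<in> graphs_deg n d. A \<subseteq> G \<and> B \<inter> G = {}}"
    using switch_in_graphs_deg[OF assms] switch_in_graphs_deg[OF BA] AB by auto
qed

lemma sum_switch_eq:
  fixes A B :: "'k \<Rightarrow> nat set set"
  assumes "finite K" "\<And>k. k \<in> K \<Longrightarrow> P k \<Longrightarrow> switchable n (A k) (B k)"
  shows "(\<Sum>G\<in>graphs_deg n d. \<Sum>k\<in>K. of_bool (P k \<and> A k \<subseteq> G \<and> B k \<inter> G = {}) :: real) =
         (\<Sum>G\<in>graphs_deg n d. \<Sum>k\<in>K. of_bool (P k \<and> B k \<subseteq> G \<and> A k \<inter> G = {}))"
proof -
  have "(\<Sum>G\<in>graphs_deg n d. of_bool (P k \<and> A k \<subseteq> G \<and> B k \<inter> G = {}) :: real) =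
        (\<Sum>G\<in>graphs_deg n d. of_bool (P k \<and> B k \<subseteq> G \<and> A k \<inter> G = {}))" if "k \<in> K" for k
    using card_switch_eq[OF assms(2)[OF that], of d]
    by (cases "P k") (simp_all add: finite_graphs_deg Int_def)
  then show ?thesis
    by (subst (1 2) sum.swap) (simp add: assms(1))
qed

lemma doubleton_in_all_edges: "u < n \<Longrightarrow> v < n \<Longrightarrow> u \<noteq> v \<Longrightarrow> {u, v} \<in> all_edges n"
  by (auto simp: all_edges_def)

definition edge_set :: "(nat \<times> nat) list \<Rightarrow> nat set set" where
  "edge_set ps = (\<lambda>(u, v). {u, v}) ` set ps"

definition endpoints :: "(nat \<times> nat) list \<Rightarrow> nat multiset" where
  "endpoints ps = (\<Sum>(u, v)\<leftarrow>ps. {#u, v#})"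

lemma degree_edge_set:
  assumes "distinct (map (\<lambda>(u, v). {u, v}) ps)" "\<forall>(u, v)\<in>set ps. u \<noteq> v"
  shows "degree (edge_set ps) i = count (endpoints ps) i"
  using assms
proof (induction ps)
  case Nil
  then show ?case by (simp add: degree_def edge_set_def endpoints_def)
next
  case (Cons p ps)
  obtain u v where p: "p = (u, v)" by fastforce
  have "{u, v} \<notin> edge_set ps" "u \<noteq> v"
    using Cons.prems by (simp_all add: p edge_set_def)
  moreover have "{e \<in> edge_set (p # ps). i \<in> e} =
      (if i \<in> {u, v} then insert {u, v} {e \<in> edge_set ps. i \<in> e} else {e \<in> edge_set ps. i \<in> e})"
    by (auto simp: p edge_set_def)
  moreover have "finite (edge_set ps)" by (simp add: edge_set_def)
  ultimately have "degree (edge_set (p # ps)) i = of_bool (i = u) + of_bool (i = v) + degree (edge_set ps) i"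
    by (auto simp: degree_def)
  then show ?case
    using Cons by (simp add: p endpoints_def)
qed

lemma switchable_edge_setI:
  assumes "\<forall>(u, v)\<in>set ps \<union> set qs. u < n \<and> v < n \<and> u \<noteq> v"
    and "distinct (map (\<lambda>(u, v). {u, v}) ps)" "distinct (map (\<lambda>(u, v). {u, v}) qs)"
    and "edge_set ps \<inter> edge_set qs = {}"
    and "endpoints ps = endpoints qs"
  shows "switchable n (edge_set ps) (edge_set qs)"
proof -
  have loop_free: "\<forall>(u, v)\<in>set ps. u \<noteq> v" "\<forall>(u, v)\<in>set qs. u \<noteq> v"
    using assms(1) by auto
  have "edge_set ps \<subseteq> all_edges n" "edge_set qs \<subseteq> all_edges n"
    using assms(1) by (auto simp: edge_set_def intro!: doubleton_in_all_edges)
  moreover have "degree (edge_set ps) i = degree (edge_set qs) i" for i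
    using loop_free assms(2,3,5) by (simp add: degree_edge_set)
  ultimately show ?thesis
    using assms(4) by (simp add: switchable_def)
qed

fun pair_edges :: "nat \<Rightarrow> nat \<Rightarrow> nat \<times> nat \<Rightarrow> nat set set" where
  "pair_edges a b (u, v) = edge_set [(a, b), (u, v)]"

fun crossed_edges :: "nat \<Rightarrow> nat \<Rightarrow> nat \<times> nat \<Rightarrow> nat set set" where
  "crossed_edges a b (u, v) = edge_set [(a, u), (b, v)]"

section \<open>Nested finite sums\<close>

lemma sum_mult3_nested:
  fixes f g h :: "'a \<Rightarrow> 'a \<Rightarrow> 'b::comm_semiring_1"
  shows "(\<Sum>i\<in>A. \<Sum>j\<in>A. \<Sum>k\<in>A. \<Sum>l\<in>A. \<Sum>p\<in>A. \<Sum>q\<in>A. f i j * g k l * h p q) =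
    (\<Sum>i\<in>A. \<Sum>j\<in>A. f i j) * (\<Sum>k\<in>A. \<Sum>l\<in>A. g k l) * (\<Sum>p\<in>A. \<Sum>q\<in>A. h p q)"
  by (simp only: sum_distrib_left[symmetric] sum_distrib_right[symmetric] mult.assoc)

lemma double_sum_mult_ge:
  fixes f g :: "'a \<Rightarrow> 'b \<Rightarrow> 'c::linordered_idom"
  assumes "\<And>i j. i \<in> I \<Longrightarrow> j \<in> J \<Longrightarrow> 0 \<le> f i j" "a \<le> (\<Sum>i\<in>I. \<Sum>j\<in>J. f i j)"
    and "\<And>i j. i \<in> I \<Longrightarrow> j \<in> J \<Longrightarrow> b \<le> g i j" "0 \<le> b"
  shows "a * b \<le> (\<Sum>i\<in>I. \<Sum>j\<in>J. f i j * g i j)"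
proof -
  have "a * b \<le> (\<Sum>i\<in>I. \<Sum>j\<in>J. f i j) * b"
    using assms(2,4) by (rule mult_right_mono)
  also have "\<dots> = (\<Sum>i\<in>I. \<Sum>j\<in>J. f i j * b)"
    by (simp add: sum_distrib_right)
  also have "\<dots> \<le> (\<Sum>i\<in>I. \<Sum>j\<in>J. f i j * g i j)"
    using assms(1,3) by (intro sum_mono mult_left_mono) auto
  finally show ?thesis .
qed

lemma sum_of_bool_eq_mult:
  fixes g :: "'a \<Rightarrow> 'b::semiring_1"
  assumes "finite A" "x \<in> A"
  shows "(\<Sum>y\<in>A. of_bool (x = y) * g y) = g x"
  using assms by (simp add: sum_of_bool_mult_eq Int_def Collect_conv_if)

lemma sum3_not_distinct_le:
  fixes f :: "'a \<Rightarrow> 'b::linordered_idom"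
  assumes "finite A" "\<And>x. 0 \<le> f x"
  shows "(\<Sum>a\<in>A. \<Sum>b\<in>A. \<Sum>c\<in>A. of_bool (\<not> distinct [a, b, c]) * (f a * f b * f c))
    \<le> 3 * (\<Sum>a\<in>A. f a ^ 2) * (\<Sum>a\<in>A. f a)"
proof -
  have diag: "(\<Sum>a\<in>A. \<Sum>b\<in>A. of_bool (a = b) * (f a * f b)) = (\<Sum>a\<in>A. f a ^ 2)"
    using assms(1) by (intro sum.cong refl) (simp add: sum_of_bool_eq_mult power2_eq_square)
  have diag': "(\<Sum>a\<in>A. \<Sum>c\<in>A. of_bool (c = a) * (f c * f a)) = (\<Sum>a\<in>A. f a ^ 2)"
    using diag by (simp add: eq_commute mult.commute)
  have "(\<Sum>a\<in>A. \<Sum>b\<in>A. \<Sum>c\<in>A. of_bool (\<not> distinct [a, b, c]) * (f a * f b * f c))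
      \<le> (\<Sum>a\<in>A. \<Sum>b\<in>A. \<Sum>c\<in>A. of_bool (a = b) * (f a * f b) * f c)
        + (\<Sum>a\<in>A. \<Sum>b\<in>A. \<Sum>c\<in>A. f a * (of_bool (b = c) * (f b * f c)))
        + (\<Sum>a\<in>A. \<Sum>b\<in>A. \<Sum>c\<in>A. f b * (of_bool (c = a) * (f c * f a)))"
    unfolding sum.distrib[symmetric]
    using assms(2) by (intro sum_mono) (auto simp: mult_nonneg_nonneg mult_ac)
  also have "\<dots> = 3 * (\<Sum>a\<in>A. f a ^ 2) * (\<Sum>a\<in>A. f a)"
    by (simp only: sum_distrib_left[symmetric] sum_distrib_right[symmetric] diag diag') simp
  finally show ?thesis .
qed

lemma sum_swap_inner3:
  "(\<Sum>a\<in>A. \<Sum>b\<in>B. \<Sum>x\<in>C. f a b x) = (\<Sum>x\<in>C. \<Sum>a\<in>A. \<Sum>b\<in>B. f a b x)"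
proof -
  have "(\<Sum>a\<in>A. \<Sum>b\<in>B. \<Sum>x\<in>C. f a b x) = (\<Sum>a\<in>A. \<Sum>x\<in>C. \<Sum>b\<in>B. f a b x)"
    by (intro sum.cong refl sum.swap)
  also have "\<dots> = (\<Sum>x\<in>C. \<Sum>a\<in>A. \<Sum>b\<in>B. f a b x)"
    by (rule sum.swap)
  finally show ?thesis .
qed

section \<open>Triangle configurations\<close>

definition edge :: "nat set set \<Rightarrow> nat \<Rightarrow> nat \<Rightarrow> real" where
  "edge G u v = of_bool ({u, v} \<in> G)"

lemma edge_sym: "edge G u v = edge G v u"
  by (simp add: edge_def insert_commute)

lemma edge_nonneg: "0 \<le> edge G u v"
  by (simp add: edge_def)

definition cherry :: "nat set set \<Rightarrow> nat \<Rightarrow> nat \<Rightarrow> nat \<Rightarrow> real" where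
  "cherry G v p q = edge G v p * edge G v q * of_bool (p \<noteq> q)"

type_synonym config = "nat \<times> nat \<times> nat \<times> nat \<times> nat \<times> nat \<times> nat \<times> nat \<times> nat"

fun triangle_edges :: "config \<Rightarrow> nat set set" where
  "triangle_edges (a, b, c, x1, y1, y2, z1, z2, x2) =
     edge_set [(a, b), (b, c), (c, a), (x1, y1), (y2, z1), (z2, x2)]"

fun cherry_edges :: "config \<Rightarrow> nat set set" where
  "cherry_edges (a, b, c, x1, y1, y2, z1, z2, x2) =
     edge_set [(a, x1), (b, y1), (b, y2), (c, z1), (c, z2), (a, x2)]"

fun nondegenerate :: "config \<Rightarrow> bool" where
  "nondegenerate (a, b, c, x1, y1, y2, z1, z2, x2) \<longleftrightarrow>
     distinct [a, b, c] \<and> x1 \<noteq> x2 \<and> y1 \<noteq> y2 \<and> z1 \<noteq> z2"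

definition valid_config :: "nat \<Rightarrow> config \<Rightarrow> bool" where
  "valid_config n k \<longleftrightarrow> nondegenerate k \<and> switchable n (triangle_edges k) (cherry_edges k)"

lemma endpoints_triangle_cherries:
  "endpoints [(a, b), (b, c), (c, a), (x1, y1), (y2, z1), (z2, x2)] =
   endpoints [(a, x1), (b, y1), (b, y2), (c, z1), (c, z2), (a, x2)]"
  by (simp add: endpoints_def add_mset_commute)

lemma valid_config_if_distinct:
  assumes "distinct [a, b, c, x1, y1, y2, z1, z2, x2]" "\<forall>v\<in>{a, b, c, x1, y1, y2, z1, z2, x2}. v < n"
  shows "valid_config n (a, b, c, x1, y1, y2, z1, z2, x2)"
  unfolding valid_config_def nondegenerate.simps triangle_edges.simps cherry_edges.simps using assms
  by (intro conjI switchable_edge_setI endpoints_triangle_cherries) (auto simp: edge_set_def doubleton_eq_iff)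

fun rot :: "config \<Rightarrow> config" where
  "rot (a, b, c, x1, y1, y2, z1, z2, x2) = (b, c, a, y2, z1, z2, x2, x1, y1)"

fun swap_b_leaves :: "config \<Rightarrow> config" where
  "swap_b_leaves (a, b, c, x1, y1, y2, z1, z2, x2) = (a, b, c, x1, y2, y1, z1, z2, x2)"

text \<open>The events that prevent three cherries from being switched into a triangle, up to the
  rotation \<open>a \<mapsto> b \<mapsto> c\<close>: adjacent centres, a leaf shared by two cherries, or an existing edge
  between two leaves that the switching joins.\<close>
fun defects :: "nat set set \<Rightarrow> config \<Rightarrow> real" where
  "defects G (a, b, c, x1, y1, y2, z1, z2, x2) =
     of_bool ({a, b} \<in> G) + of_bool (x1 = y1) + of_bool (x1 = y2) + of_bool ({x1, y1} \<in> G)"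

definition all_defects :: "nat set set \<Rightarrow> config \<Rightarrow> real" where
  "all_defects G k = defects G k + defects G (rot k) + defects G (rot (rot k))"

lemma defects_nonneg: "0 \<le> defects G k"
  by (induction G k rule: defects.induct) simp

lemma defects_eq_0_or_ge_1: "defects G k = 0 \<or> 1 \<le> defects G k"
  by (induction G k rule: defects.induct) (simp add: of_bool_def)

lemma all_defects_nonneg: "0 \<le> all_defects G k"
  by (simp add: all_defects_def defects_nonneg)

lemma cherry_edges_rot: "cherry_edges (rot k) = cherry_edges k"
  by (induction k rule: cherry_edges.induct) (auto simp: edge_set_def)

lemma of_bool_cherry_edges:
  "of_bool (cherry_edges (a, b, c, x1, y1, y2, z1, z2, x2) \<subseteq> G) =
   (edge G a x1 * edge G b y1) * (edge G b y2 * edge G c z1) * (edge G c z2 * edge G a x2)"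
  by (simp add: edge_set_def edge_def)

section \<open>Graphs with a given degree sequence\<close>

locale degree_sequence =
  fixes n :: nat and d :: "nat \<Rightarrow> nat"
begin

abbreviation V :: "nat set" where "V \<equiv> {..<n}"
abbreviation \<Omega> :: "nat set set set" where "\<Omega> \<equiv> graphs_deg n d"

definition D :: real where "D = real (dmax n d)"
definition M :: real where "M = real (M1 n d)"
definition Q :: real where "Q = real (M2 n d)"
definition S :: real where "S = (\<Sum>v\<in>V. real (d v) ^ 2)"
definition d2 :: "nat \<Rightarrow> real" where "d2 v = real (d v) * (real (d v) - 1)"

lemma edge_in_graph:
  assumes "G \<in> \<Omega>" "{u, v} \<in> G"
  shows "u < n" "v < n" "u \<noteq> v"
  using assms by (auto simp: graphs_deg_def all_edges_def doubleton_eq_iff)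

lemma degree_le_D: "v < n \<Longrightarrow> real (d v) \<le> D"
  unfolding D_def dmax_def by (auto intro: Max_ge)

lemma D_nonneg: "0 \<le> D"
  by (simp add: D_def)

lemma sum_degrees: "(\<Sum>v\<in>V. real (d v)) = M"
  by (simp add: M_def M1_def)

lemma sum_d2: "(\<Sum>v\<in>V. d2 v) = Q"
  unfolding Q_def M2_def d2_def of_nat_sum
proof (intro sum.cong refl)
  show "real (d v) * (real (d v) - 1) = real (d v * (d v - 1))" for v
    by (cases "d v") (simp_all add: algebra_simps)
qed

lemma S_eq: "S = Q + M"
  unfolding S_def sum_d2[symmetric] sum_degrees[symmetric] sum.distrib[symmetric]
  by (intro sum.cong) (auto simp: d2_def power2_eq_square algebra_simps)

lemma d2_nonneg: "0 \<le> d2 v"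
  by (cases "d v") (auto simp: d2_def)

lemma d2_le: "v < n \<Longrightarrow> d2 v \<le> D ^ 2"
  using power_mono[OF degree_le_D, of v 2] by (simp add: d2_def power2_eq_square algebra_simps)

lemma card_neighbours:
  assumes G: "G \<in> \<Omega>" and x: "x < n"
  shows "card {y \<in> V. {x, y} \<in> G} = d x"
proof -
  have "bij_betw (\<lambda>y. {x, y}) {y \<in> V. {x, y} \<in> G} {e \<in> G. x \<in> e}"
  proof (rule bij_betwI')
    fix e assume e: "e \<in> {e \<in> G. x \<in> e}"
    then obtain i j where "i < n" "j < n" "e = {i, j}"
      using G by (auto simp: graphs_deg_def all_edges_def)
    with e show "\<exists>y\<in>{y \<in> V. {x, y} \<in> G}. e = {x, y}"
      by (cases "x = i") (auto simp: insert_commute)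
  qed (auto simp: doubleton_eq_iff)
  then show ?thesis
    using G x by (simp add: bij_betw_same_card graphs_deg_def degree_def)
qed

lemma sum_edge:
  assumes "G \<in> \<Omega>" "x < n"
  shows "(\<Sum>y\<in>V. edge G x y) = real (d x)"
  using card_neighbours[OF assms] by (simp add: edge_def Int_def)

lemma sum_edge':
  assumes "G \<in> \<Omega>" "x < n"
  shows "(\<Sum>y\<in>V. edge G y x) = real (d x)"
  using sum_edge[OF assms] by (simp add: edge_sym)

lemma sum_sum_edge: "G \<in> \<Omega> \<Longrightarrow> (\<Sum>x\<in>V. \<Sum>y\<in>V. edge G x y) = M"
  by (simp add: sum_edge sum_degrees)

lemma sum_cherry:
  assumes G: "G \<in> \<Omega>" and v: "v < n"
  shows "(\<Sum>p\<in>V. \<Sum>q\<in>V. cherry G v p q) = d2 v"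
proof -
  have "(\<Sum>q\<in>V. cherry G v p q) = edge G v p * (real (d v) - 1)" if "p < n" for p
  proof -
    have "(\<Sum>q\<in>V. cherry G v p q) = (\<Sum>q\<in>V. edge G v p * (edge G v q - of_bool (q = p)))"
      by (intro sum.cong) (auto simp: cherry_def edge_def)
    also have "\<dots> = edge G v p * (real (d v) - 1)"
      using that by (simp add: sum_distrib_left[symmetric] sum_subtractf sum_edge[OF G v])
    finally show ?thesis .
  qed
  then show ?thesis
    by (simp add: sum_distrib_right[symmetric] sum_edge[OF G v] d2_def)
qed

lemma sum_edges_from_le:
  assumes "G \<in> \<Omega>" "finite X"
  shows "(\<Sum>u\<in>V. \<Sum>v\<in>V. of_bool (u \<in> X) * edge G u v) \<le> real (card X) * D"
proof -
  have "(\<Sum>u\<in>V. \<Sum>v\<in>V. of_bool (u \<in> X) * edge G u v) = (\<Sum>u\<in>V \<inter> X. real (d u))"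
    using assms by (simp add: sum_distrib_left[symmetric] sum_edge sum_of_bool_mult_eq)
  also have "\<dots> \<le> real (card (V \<inter> X)) * D"
    by (rule sum_bounded_above) (simp add: degree_le_D)
  also have "\<dots> \<le> real (card X) * D"
    using assms D_nonneg by (intro mult_right_mono) (simp_all add: card_mono)
  finally show ?thesis .
qed

lemma edges_avoiding_ge:
  assumes G: "G \<in> \<Omega>" and "finite X" "finite Y"
  shows "M - (real (card X) + real (card Y)) * D
    \<le> (\<Sum>u\<in>V. \<Sum>v\<in>V. edge G u v * of_bool (u \<notin> X \<and> v \<notin> Y))"
proof -
  have "(\<Sum>u\<in>V. \<Sum>v\<in>V. of_bool (v \<in> Y) * edge G u v) = (\<Sum>v\<in>V. \<Sum>u\<in>V. of_bool (v \<in> Y) * edge G v u)"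
    by (subst sum.swap) (simp add: edge_sym)
  then have "(\<Sum>u\<in>V. \<Sum>v\<in>V. of_bool (u \<in> X) * edge G u v + of_bool (v \<in> Y) * edge G u v)
      \<le> (real (card X) + real (card Y)) * D"
    using sum_edges_from_le[OF G] assms by (simp add: sum.distrib distrib_right add_mono)
  moreover have "(\<Sum>u\<in>V. \<Sum>v\<in>V. edge G u v * of_bool (u \<in> X \<or> v \<in> Y))
      \<le> (\<Sum>u\<in>V. \<Sum>v\<in>V. of_bool (u \<in> X) * edge G u v + of_bool (v \<in> Y) * edge G u v)"
    by (intro sum_mono) (auto simp: edge_def)
  moreover have "(\<Sum>u\<in>V. \<Sum>v\<in>V. edge G u v * of_bool (u \<notin> X \<and> v \<notin> Y)) =
      M - (\<Sum>u\<in>V. \<Sum>v\<in>V. edge G u v * of_bool (u \<in> X \<or> v \<in> Y))"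
    unfolding sum_sum_edge[OF G, symmetric] sum_subtractf[symmetric]
    by (intro sum.cong refl) (simp add: of_bool_def)
  ultimately show ?thesis by linarith
qed

lemma edges_avoiding_neighbours_ge:
  assumes G: "G \<in> \<Omega>" and "a < n" "b < n" "finite F" "card F \<le> k"
  shows "M - 2 * (real k + D) * D
    \<le> (\<Sum>u\<in>V. \<Sum>v\<in>V. edge G u v * of_bool (u \<notin> F \<and> v \<notin> F \<and> {a, u} \<notin> G \<and> {b, v} \<notin> G))"
proof -
  define X where "X = F \<union> {u \<in> V. {a, u} \<in> G}"
  define Y where "Y = F \<union> {v \<in> V. {b, v} \<in> G}"
  have "card X \<le> card F + d a"
    using card_Un_le[of F "{u \<in> V. {a, u} \<in> G}"] card_neighbours[OF G assms(2)] by (simp add: X_def)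
  moreover have "card Y \<le> card F + d b"
    using card_Un_le[of F "{v \<in> V. {b, v} \<in> G}"] card_neighbours[OF G assms(3)] by (simp add: Y_def)
  ultimately have "card X \<le> k + d a" "card Y \<le> k + d b"
    using assms(5) by simp_all
  then have "real (card X) \<le> real k + real (d a)" "real (card Y) \<le> real k + real (d b)"
    by (simp_all only: of_nat_add[symmetric] of_nat_le_iff)
  then have "real (card X) \<le> real k + D" "real (card Y) \<le> real k + D"
    using degree_le_D[OF assms(2)] degree_le_D[OF assms(3)] by linarith+
  then have "M - 2 * (real k + D) * D \<le> M - (real (card X) + real (card Y)) * D"
    using D_nonneg by (simp add: mult_right_mono)
  also have "\<dots> \<le> (\<Sum>u\<in>V. \<Sum>v\<in>V. edge G u v * of_bool (u \<notin> X \<and> v \<notin> Y))"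
    using assms by (intro edges_avoiding_ge) (auto simp: X_def Y_def)
  also have "\<dots> = (\<Sum>u\<in>V. \<Sum>v\<in>V. edge G u v * of_bool (u \<notin> F \<and> v \<notin> F \<and> {a, u} \<notin> G \<and> {b, v} \<notin> G))"
    by (intro sum.cong refl) (auto simp: X_def Y_def)
  finally show ?thesis .
qed

lemma pair_switchings_ge:
  assumes G: "G \<in> \<Omega>" and ab: "{a, b} \<in> G"
  shows "M - 2 * (2 + D) * D \<le> (\<Sum>k\<in>V \<times> V. of_bool (switchable n (pair_edges a b k) (crossed_edges a b k)
    \<and> pair_edges a b k \<subseteq> G \<and> crossed_edges a b k \<inter> G = {}))"
proof -
  have "a < n" "b < n" "a \<noteq> b"
    using edge_in_graph[OF G ab] by auto
  have switch: "switchable n (pair_edges a b (u, v)) (crossed_edges a b (u, v))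
      \<and> pair_edges a b (u, v) \<subseteq> G \<and> crossed_edges a b (u, v) \<inter> G = {}"
    if uv: "{u, v} \<in> G" "u \<notin> {a, b}" "v \<notin> {a, b}" "{a, u} \<notin> G" "{b, v} \<notin> G" for u v
  proof -
    have "u < n" "v < n" "u \<noteq> v"
      using edge_in_graph[OF G uv(1)] by auto
    then have "switchable n (pair_edges a b (u, v)) (crossed_edges a b (u, v))"
      unfolding pair_edges.simps crossed_edges.simps using uv \<open>a < n\<close> \<open>b < n\<close> \<open>a \<noteq> b\<close>
      by (intro switchable_edge_setI) (auto simp: edge_set_def endpoints_def doubleton_eq_iff)
    then show ?thesis
      using uv ab by (auto simp: edge_set_def)
  qed
  have "M - 2 * (2 + D) * D \<le> (\<Sum>u\<in>V. \<Sum>v\<in>V. edge G u v *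
      of_bool (u \<notin> {a, b} \<and> v \<notin> {a, b} \<and> {a, u} \<notin> G \<and> {b, v} \<notin> G))"
    using edges_avoiding_neighbours_ge[OF G \<open>a < n\<close> \<open>b < n\<close>, of "{a, b}" 2] \<open>a \<noteq> b\<close> by simp
  also have "\<dots> \<le> (\<Sum>k\<in>V \<times> V. of_bool (switchable n (pair_edges a b k) (crossed_edges a b k)
      \<and> pair_edges a b k \<subseteq> G \<and> crossed_edges a b k \<inter> G = {}))"
    unfolding sum.cartesian_product
  proof (intro sum_mono, clarify)
    fix u v
    show "edge G u v * of_bool (u \<notin> {a, b} \<and> v \<notin> {a, b} \<and> {a, u} \<notin> G \<and> {b, v} \<notin> G)
        \<le> of_bool (switchable n (pair_edges a b (u, v)) (crossed_edges a b (u, v))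
          \<and> pair_edges a b (u, v) \<subseteq> G \<and> crossed_edges a b (u, v) \<inter> G = {})"
      using switch[of u v] by (auto simp: edge_def)
  qed
  finally show ?thesis .
qed

lemma pair_switchings_le:
  assumes G: "G \<in> \<Omega>" and "a < n" "b < n"
  shows "(\<Sum>k\<in>V \<times> V. of_bool (switchable n (pair_edges a b k) (crossed_edges a b k)
    \<and> crossed_edges a b k \<subseteq> G \<and> pair_edges a b k \<inter> G = {})) \<le> real (d a) * real (d b)"
proof -
  have "(\<Sum>k\<in>V \<times> V. of_bool (switchable n (pair_edges a b k) (crossed_edges a b k)
      \<and> crossed_edges a b k \<subseteq> G \<and> pair_edges a b k \<inter> G = {})) \<le> (\<Sum>u\<in>V. \<Sum>v\<in>V. edge G a u * edge G b v)"
    unfolding sum.cartesian_product by (intro sum_mono, clarify) (simp add: edge_set_def edge_def)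
  also have "\<dots> = real (d a) * real (d b)"
    using assms by (simp add: sum_distrib_left[symmetric] sum_distrib_right[symmetric] sum_edge)
  finally show ?thesis .
qed

lemma card_graphs_with_edge_le:
  assumes "a < n" "b < n"
  shows "(M - 2 * (2 + D) * D) * real (card {G \<in> \<Omega>. {a, b} \<in> G}) \<le> real (card \<Omega>) * d a * d b"
proof -
  let ?switchable = "\<lambda>k. switchable n (pair_edges a b k) (crossed_edges a b k)"
  have "(M - 2 * (2 + D) * D) * real (card {G \<in> \<Omega>. {a, b} \<in> G}) =
      (\<Sum>G\<in>\<Omega>. edge G a b * (M - 2 * (2 + D) * D))"
    by (simp add: edge_def sum_of_bool_mult_eq finite_graphs_deg Int_def)
  also have "\<dots> \<le> (\<Sum>G\<in>\<Omega>. \<Sum>k\<in>V \<times> V.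
      of_bool (?switchable k \<and> pair_edges a b k \<subseteq> G \<and> crossed_edges a b k \<inter> G = {}))"
    using pair_switchings_ge by (intro sum_mono) (auto simp: edge_def sum_nonneg)
  also have "\<dots> = (\<Sum>G\<in>\<Omega>. \<Sum>k\<in>V \<times> V.
      of_bool (?switchable k \<and> crossed_edges a b k \<subseteq> G \<and> pair_edges a b k \<inter> G = {}))"
    by (rule sum_switch_eq) simp_all
  also have "\<dots> \<le> (\<Sum>G\<in>\<Omega>. real (d a) * real (d b))"
    using pair_switchings_le assms by (intro sum_mono) auto
  finally show ?thesis
    by (simp add: mult.assoc)
qed

definition edge_weight :: "nat set set \<Rightarrow> real" where
  "edge_weight G = (\<Sum>u\<in>V. \<Sum>v\<in>V. edge G u v * real (d u) * real (d v))"

lemma sum_edge_weight_le: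
  "(M - 2 * (2 + D) * D) * (\<Sum>G\<in>\<Omega>. edge_weight G) \<le> real (card \<Omega>) * S ^ 2"
proof -
  have "(\<Sum>G\<in>\<Omega>. edge G u v) = real (card {G \<in> \<Omega>. {u, v} \<in> G})" for u v
    by (simp add: edge_def finite_graphs_deg Int_def)
  then have "(\<Sum>G\<in>\<Omega>. edge_weight G) = (\<Sum>u\<in>V. \<Sum>v\<in>V. real (card {G \<in> \<Omega>. {u, v} \<in> G}) * (d u * d v))"
    unfolding edge_weight_def
    by (subst sum.swap, intro sum.cong refl, subst sum.swap) (simp add: sum_distrib_right[symmetric] mult.assoc)
  then have "(M - 2 * (2 + D) * D) * (\<Sum>G\<in>\<Omega>. edge_weight G) =
      (\<Sum>u\<in>V. \<Sum>v\<in>V. ((M - 2 * (2 + D) * D) * real (card {G \<in> \<Omega>. {u, v} \<in> G})) * (d u * d v))"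
    by (simp add: sum_distrib_left mult.assoc)
  also have "\<dots> \<le> (\<Sum>u\<in>V. \<Sum>v\<in>V. (real (card \<Omega>) * d u * d v) * (d u * d v))"
  proof (intro sum_mono mult_right_mono)
    fix u v assume "u \<in> V" "v \<in> V"
    then show "(M - 2 * (2 + D) * D) * real (card {G \<in> \<Omega>. {u, v} \<in> G}) \<le> real (card \<Omega>) * d u * d v"
      by (intro card_graphs_with_edge_le) simp_all
  qed simp
  also have "\<dots> = real (card \<Omega>) * S ^ 2"
    by (simp add: S_def power2_eq_square sum_distrib_left sum_distrib_right mult_ac)
  finally show ?thesis .
qed

definition configs :: "config set" where
  "configs = V \<times> V \<times> V \<times> V \<times> V \<times> V \<times> V \<times> V \<times> V"

lemma finite_configs: "finite configs"
  by (simp add: configs_def)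

lemma sum_configs:
  "(\<Sum>(a, b, c, x1, y1, y2, z1, z2, x2)\<in>configs. f a b c x1 y1 y2 z1 z2 x2) =
   (\<Sum>a\<in>V. \<Sum>b\<in>V. \<Sum>c\<in>V. \<Sum>x1\<in>V. \<Sum>y1\<in>V. \<Sum>y2\<in>V. \<Sum>z1\<in>V. \<Sum>z2\<in>V. \<Sum>x2\<in>V.
      f a b c x1 y1 y2 z1 z2 x2)"
  by (simp add: configs_def sum.cartesian_product)

lemma sum_configs_cherries:
  "(\<Sum>(a, b, c, x1, y1, y2, z1, z2, x2)\<in>configs. f a b c x1 y1 y2 z1 z2 x2) =
   (\<Sum>a\<in>V. \<Sum>b\<in>V. \<Sum>c\<in>V. \<Sum>x1\<in>V. \<Sum>x2\<in>V. \<Sum>y1\<in>V. \<Sum>y2\<in>V. \<Sum>z1\<in>V. \<Sum>z2\<in>V.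
      f a b c x1 y1 y2 z1 z2 x2)"
  unfolding configs_def sum.cartesian_product
  by (rule sum.reindex_bij_witness[where i = "\<lambda>(a, b, c, x1, x2, y1, y2, z1, z2). (a, b, c, x1, y1, y2, z1, z2, x2)"
        and j = "\<lambda>(a, b, c, x1, y1, y2, z1, z2, x2). (a, b, c, x1, x2, y1, y2, z1, z2)"]) auto

lemma sum_configs_rot: "(\<Sum>k\<in>configs. f (rot k)) = (\<Sum>k\<in>configs. f k)"
  unfolding configs_def
  by (rule sum.reindex_bij_witness[where i = "rot \<circ> rot" and j = rot]) auto

definition forward :: "nat set set \<Rightarrow> config \<Rightarrow> bool" where
  "forward G k \<longleftrightarrow> valid_config n k \<and> triangle_edges k \<subseteq> G \<and> cherry_edges k \<inter> G = {}"

definition backward :: "nat set set \<Rightarrow> config \<Rightarrow> bool" where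
  "backward G k \<longleftrightarrow> valid_config n k \<and> cherry_edges k \<subseteq> G \<and> triangle_edges k \<inter> G = {}"

lemma sum_forward_eq_sum_backward:
  "(\<Sum>G\<in>\<Omega>. \<Sum>k\<in>configs. of_bool (forward G k)) = (\<Sum>G\<in>\<Omega>. \<Sum>k\<in>configs. of_bool (backward G k) :: real)"
  unfolding forward_def backward_def
proof (rule sum_switch_eq[OF finite_configs])
  show "switchable n (triangle_edges k) (cherry_edges k)" if "valid_config n k" for k
    using that by (simp add: valid_config_def)
qed

definition ordered_triangles :: "nat set set \<Rightarrow> real" where
  "ordered_triangles G = (\<Sum>a\<in>V. \<Sum>b\<in>V. \<Sum>c\<in>V. edge G a b * edge G b c * edge G c a)"

lemma forward_le:
  assumes G: "G \<in> \<Omega>"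
  shows "(\<Sum>k\<in>configs. of_bool (forward G k)) \<le> ordered_triangles G * M ^ 3"
proof -
  have "(\<Sum>k\<in>configs. of_bool (forward G k)) \<le> (\<Sum>(a, b, c, x1, y1, y2, z1, z2, x2)\<in>configs.
      (edge G a b * edge G b c * edge G c a) * (edge G x1 y1 * edge G y2 z1 * edge G z2 x2))"
    by (intro sum_mono, clarify) (auto simp: forward_def edge_def edge_set_def)
  also have "\<dots> = (\<Sum>a\<in>V. \<Sum>b\<in>V. \<Sum>c\<in>V. (edge G a b * edge G b c * edge G c a) *
      (\<Sum>x1\<in>V. \<Sum>y1\<in>V. \<Sum>y2\<in>V. \<Sum>z1\<in>V. \<Sum>z2\<in>V. \<Sum>x2\<in>V.
        edge G x1 y1 * edge G y2 z1 * edge G z2 x2))"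
    unfolding sum_configs by (simp only: sum_distrib_left)
  also have "\<dots> = (\<Sum>a\<in>V. \<Sum>b\<in>V. \<Sum>c\<in>V. (edge G a b * edge G b c * edge G c a) * M ^ 3)"
    unfolding sum_mult3_nested sum_sum_edge[OF G] by (simp add: power3_eq_cube)
  also have "\<dots> = ordered_triangles G * M ^ 3"
    by (simp add: ordered_triangles_def sum_distrib_right)
  finally show ?thesis .
qed

lemma forward_if_fresh:
  assumes G: "G \<in> \<Omega>" and abc: "{a, b} \<in> G" "{b, c} \<in> G" "{c, a} \<in> G"
    and edges: "{x1, y1} \<in> G" "{y2, z1} \<in> G" "{z2, x2} \<in> G"
    and fresh: "x1 \<notin> {a, b, c}" "y1 \<notin> {a, b, c}" "y2 \<notin> {a, b, c, x1, y1}" "z1 \<notin> {a, b, c, x1, y1}"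
      "z2 \<notin> {a, b, c, x1, y1, y2, z1}" "x2 \<notin> {a, b, c, x1, y1, y2, z1}"
    and non_adjacent: "{a, x1} \<notin> G" "{b, y1} \<notin> G" "{b, y2} \<notin> G" "{c, z1} \<notin> G" "{c, z2} \<notin> G" "{a, x2} \<notin> G"
  shows "forward G (a, b, c, x1, y1, y2, z1, z2, x2)"
proof -
  have "valid_config n (a, b, c, x1, y1, y2, z1, z2, x2)"
    using abc edges fresh edge_in_graph[OF G] by (intro valid_config_if_distinct) (simp_all, metis)
  then show ?thesis
    using abc edges non_adjacent by (simp add: forward_def edge_set_def)
qed

text \<open>For a triangle \<open>abc\<close>, the edges \<open>x1y1\<close>, \<open>y2z1\<close>, \<open>z2x2\<close> can be chosen one after the other,
  each avoiding the at most seven vertices chosen so far and the relevant neighbourhoods.\<close>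
lemma forward_ge_triangle:
  assumes G: "G \<in> \<Omega>" and abc: "{a, b} \<in> G" "{b, c} \<in> G" "{c, a} \<in> G"
    and m: "2 * (7 + D) * D \<le> M"
  shows "(M - 2 * (7 + D) * D) ^ 3 \<le> (\<Sum>x1\<in>V. \<Sum>y1\<in>V. \<Sum>y2\<in>V. \<Sum>z1\<in>V. \<Sum>z2\<in>V. \<Sum>x2\<in>V.
      of_bool (forward G (a, b, c, x1, y1, y2, z1, z2, x2)))"
proof -
  let ?m = "M - 2 * (7 + D) * D"
  have "a < n" "b < n" "c < n"
    using edge_in_graph[OF G abc(1)] edge_in_graph[OF G abc(2)] by auto
  define C where "C F p q u v = edge G u v * of_bool (u \<notin> set F \<and> v \<notin> set F \<and> {p, u} \<notin> G \<and> {q, v} \<notin> G)"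
    for F p q u v
  have low: "?m \<le> (\<Sum>u\<in>V. \<Sum>v\<in>V. C F p q u v)" if "length F \<le> 7" "p < n" "q < n" for F p q
    unfolding C_def using edges_avoiding_neighbours_ge[OF G that(2,3), of "set F" 7] that(1) card_length[of F]
    by simp
  have C_nonneg: "0 \<le> C F p q u v" for F p q u v
    by (simp add: C_def edge_def)
  have "?m * (?m * ?m) \<le> (\<Sum>x1\<in>V. \<Sum>y1\<in>V. C [a, b, c] a b x1 y1 *
      (\<Sum>y2\<in>V. \<Sum>z1\<in>V. C [a, b, c, x1, y1] b c y2 z1 *
        (\<Sum>z2\<in>V. \<Sum>x2\<in>V. C [a, b, c, x1, y1, y2, z1] c a z2 x2)))"
    using m \<open>a < n\<close> \<open>b < n\<close> \<open>c < n\<close>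
    by (intro double_sum_mult_ge low C_nonneg) simp_all
  also have "\<dots> \<le> (\<Sum>x1\<in>V. \<Sum>y1\<in>V. \<Sum>y2\<in>V. \<Sum>z1\<in>V. \<Sum>z2\<in>V. \<Sum>x2\<in>V.
      of_bool (forward G (a, b, c, x1, y1, y2, z1, z2, x2)))"
    unfolding sum_distrib_left
  proof (intro sum_mono)
    fix x1 y1 y2 z1 z2 x2 :: nat
    show "C [a, b, c] a b x1 y1 * (C [a, b, c, x1, y1] b c y2 z1 * C [a, b, c, x1, y1, y2, z1] c a z2 x2)
        \<le> of_bool (forward G (a, b, c, x1, y1, y2, z1, z2, x2))"
      using forward_if_fresh[OF G abc, of x1 y1 y2 z1 z2 x2] by (auto simp: C_def edge_def)
  qed
  finally show ?thesis
    by (simp add: power3_eq_cube)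
qed

lemma forward_ge:
  assumes G: "G \<in> \<Omega>" and m: "2 * (7 + D) * D \<le> M"
  shows "ordered_triangles G * (M - 2 * (7 + D) * D) ^ 3 \<le> (\<Sum>k\<in>configs. of_bool (forward G k))"
proof -
  have "ordered_triangles G * (M - 2 * (7 + D) * D) ^ 3 =
      (\<Sum>a\<in>V. \<Sum>b\<in>V. \<Sum>c\<in>V. edge G a b * edge G b c * edge G c a * (M - 2 * (7 + D) * D) ^ 3)"
    by (simp add: ordered_triangles_def sum_distrib_right)
  also have "\<dots> \<le> (\<Sum>a\<in>V. \<Sum>b\<in>V. \<Sum>c\<in>V. \<Sum>x1\<in>V. \<Sum>y1\<in>V. \<Sum>y2\<in>V. \<Sum>z1\<in>V. \<Sum>z2\<in>V. \<Sum>x2\<in>V.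
      of_bool (forward G (a, b, c, x1, y1, y2, z1, z2, x2)))"
    using forward_ge_triangle[OF G _ _ _ m] by (intro sum_mono) (auto simp: edge_def sum_nonneg)
  also have "\<dots> = (\<Sum>k\<in>configs. of_bool (forward G k))"
    unfolding sum_configs[symmetric] by (intro sum.cong refl) auto
  finally show ?thesis .
qed

definition Q_distinct :: real where
  "Q_distinct = (\<Sum>a\<in>V. \<Sum>b\<in>V. \<Sum>c\<in>V. of_bool (distinct [a, b, c]) * (d2 a * d2 b * d2 c))"

lemma sum_nondegenerate_cherries:
  assumes G: "G \<in> \<Omega>"
  shows "(\<Sum>(a, b, c, x1, y1, y2, z1, z2, x2)\<in>configs.
      of_bool (distinct [a, b, c]) * (cherry G a x1 x2 * cherry G b y1 y2 * cherry G c z1 z2)) = Q_distinct"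
  unfolding sum_configs_cherries Q_distinct_def
proof (intro sum.cong refl)
  fix a b c assume "a \<in> V" "b \<in> V" "c \<in> V"
  then have "(\<Sum>x1\<in>V. \<Sum>x2\<in>V. \<Sum>y1\<in>V. \<Sum>y2\<in>V. \<Sum>z1\<in>V. \<Sum>z2\<in>V.
      cherry G a x1 x2 * cherry G b y1 y2 * cherry G c z1 z2) = d2 a * d2 b * d2 c"
    unfolding sum_mult3_nested using G by (simp add: sum_cherry)
  then show "(\<Sum>x1\<in>V. \<Sum>x2\<in>V. \<Sum>y1\<in>V. \<Sum>y2\<in>V. \<Sum>z1\<in>V. \<Sum>z2\<in>V.
      of_bool (distinct [a, b, c]) * (cherry G a x1 x2 * cherry G b y1 y2 * cherry G c z1 z2)) =
      of_bool (distinct [a, b, c]) * (d2 a * d2 b * d2 c)"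
    by (simp only: sum_distrib_left[of "of_bool (distinct [a, b, c])", symmetric])
qed

lemma backward_le:
  assumes G: "G \<in> \<Omega>"
  shows "(\<Sum>k\<in>configs. of_bool (backward G k)) \<le> Q_distinct"
proof -
  have "(\<Sum>k\<in>configs. of_bool (backward G k)) \<le> (\<Sum>(a, b, c, x1, y1, y2, z1, z2, x2)\<in>configs.
      of_bool (distinct [a, b, c]) * (cherry G a x1 x2 * cherry G b y1 y2 * cherry G c z1 z2))"
    by (intro sum_mono, clarify)
      (auto simp: backward_def valid_config_def cherry_def edge_def edge_set_def)
  then show ?thesis
    using sum_nondegenerate_cherries[OF G] by simp
qed

lemma Q_cube: "Q ^ 3 = (\<Sum>a\<in>V. \<Sum>b\<in>V. \<Sum>c\<in>V. d2 a * d2 b * d2 c)"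
  unfolding power3_eq_cube sum_d2[symmetric]
  by (simp only: sum_distrib_left[symmetric] sum_distrib_right[symmetric])

lemma Q_distinct_le: "Q_distinct \<le> Q ^ 3"
  unfolding Q_distinct_def Q_cube by (intro sum_mono) (simp add: d2_nonneg)

lemma Q_distinct_ge: "Q ^ 3 - 3 * D ^ 2 * Q ^ 2 \<le> Q_distinct"
proof -
  have "Q ^ 3 - Q_distinct =
      (\<Sum>a\<in>V. \<Sum>b\<in>V. \<Sum>c\<in>V. of_bool (\<not> distinct [a, b, c]) * (d2 a * d2 b * d2 c))"
    unfolding Q_distinct_def Q_cube sum_subtractf[symmetric] by (intro sum.cong refl) (simp add: of_bool_def)
  also have "\<dots> \<le> 3 * (\<Sum>v\<in>V. d2 v ^ 2) * Q"
    using sum3_not_distinct_le[of V d2] by (simp add: d2_nonneg sum_d2)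
  also have "\<dots> \<le> 3 * (D ^ 2 * Q) * Q"
  proof -
    have "(\<Sum>v\<in>V. d2 v ^ 2) \<le> (\<Sum>v\<in>V. D ^ 2 * d2 v)"
      using d2_le d2_nonneg by (intro sum_mono) (simp add: power2_eq_square mult_right_mono)
    then have "(\<Sum>v\<in>V. d2 v ^ 2) \<le> D ^ 2 * Q"
      by (simp add: sum_distrib_left[symmetric] sum_d2)
    moreover have "0 \<le> Q" by (simp add: Q_def)
    ultimately show ?thesis
      by (simp add: mult_right_mono)
  qed
  finally show ?thesis
    by (simp add: power2_eq_square power3_eq_cube)
qed

lemma backward_if_no_defects:
  assumes G: "G \<in> \<Omega>" and k: "k = (a, b, c, x1, y1, y2, z1, z2, x2)"
    and nondeg: "nondegenerate k" and cherries: "cherry_edges k \<subseteq> G"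
    and no_defects: "\<not> 1 \<le> all_defects G k"
  shows "backward G k"
proof -
  have "defects G k = 0" "defects G (rot k) = 0" "defects G (rot (rot k)) = 0"
    using no_defects defects_nonneg defects_eq_0_or_ge_1 unfolding all_defects_def
    by (smt (verit))+
  then have nd: "{a, b} \<notin> G" "{b, c} \<notin> G" "{c, a} \<notin> G" "x1 \<noteq> y1" "y2 \<noteq> z1" "z2 \<noteq> x2"
      "x1 \<noteq> y2" "y2 \<noteq> z2" "z2 \<noteq> x1" "{x1, y1} \<notin> G" "{y2, z1} \<notin> G" "{z2, x2} \<notin> G"
    by (simp_all add: k add_nonneg_eq_0_iff)
  have ch: "{a, x1} \<in> G" "{a, x2} \<in> G" "{b, y1} \<in> G" "{b, y2} \<in> G" "{c, z1} \<in> G" "{c, z2} \<in> G"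
    using cherries by (simp_all add: k edge_set_def)
  have abc: "distinct [a, b, c]" "x1 \<noteq> x2" "y1 \<noteq> y2" "z1 \<noteq> z2"
    using nondeg by (simp_all add: k)
  have loops: "a \<noteq> x1" "a \<noteq> x2" "b \<noteq> y1" "b \<noteq> y2" "c \<noteq> z1" "c \<noteq> z2"
    using edge_in_graph(3)[OF G] ch by blast+
  have leaves: "x1 \<noteq> b" "x1 \<noteq> c" "x2 \<noteq> b" "x2 \<noteq> c" "y1 \<noteq> a" "y1 \<noteq> c" "y2 \<noteq> a" "y2 \<noteq> c"
      "z1 \<noteq> a" "z1 \<noteq> b" "z2 \<noteq> a" "z2 \<noteq> b"
    using ch nd by (metis insert_commute)+
  have in_range: "\<forall>v\<in>{a, b, c, x1, y1, y2, z1, z2, x2}. v < n"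
    using edge_in_graph(1,2)[OF G] ch by blast
  have "triangle_edges k \<inter> G = {}"
    using nd by (auto simp: k edge_set_def insert_commute)
  then have "switchable n (triangle_edges k) (cherry_edges k)"
    unfolding k triangle_edges.simps cherry_edges.simps using abc nd loops leaves in_range
    by (intro switchable_edge_setI endpoints_triangle_cherries) (auto simp: edge_set_def doubleton_eq_iff)
  then show ?thesis
    using nondeg cherries \<open>triangle_edges k \<inter> G = {}\<close> by (simp add: backward_def valid_config_def)
qed

lemma backward_ge:
  assumes G: "G \<in> \<Omega>"
  shows "Q_distinct - (\<Sum>k\<in>configs. of_bool (cherry_edges k \<subseteq> G) * all_defects G k)
    \<le> (\<Sum>k\<in>configs. of_bool (backward G k))"
proof -
  have "(\<Sum>k\<in>configs. of_bool (nondegenerate k \<and> cherry_edges k \<subseteq> G)) = Q_distinct"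
    unfolding sum_nondegenerate_cherries[OF G, symmetric]
    by (intro sum.cong refl, clarify) (auto simp: cherry_def edge_def edge_set_def)
  moreover have "of_bool (nondegenerate k \<and> cherry_edges k \<subseteq> G) - of_bool (cherry_edges k \<subseteq> G) * all_defects G k
      \<le> of_bool (backward G k)" if "k \<in> configs" for k
  proof (cases "nondegenerate k \<and> cherry_edges k \<subseteq> G \<and> \<not> 1 \<le> all_defects G k")
    case True
    obtain a b c x1 y1 y2 z1 z2 x2 where "k = (a, b, c, x1, y1, y2, z1, z2, x2)"
      by (metis prod.exhaust)
    with True have "backward G k"
      using backward_if_no_defects[OF G] by blast
    then show ?thesis
      using all_defects_nonneg[of G k] by simp
  qed (use all_defects_nonneg[of G k] in auto)
  ultimately show ?thesis
    by (metis (no_types, lifting) sum_mono sum_subtractf)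
qed

lemma sum_all_defects:
  "(\<Sum>k\<in>configs. of_bool (cherry_edges k \<subseteq> G) * all_defects G k) =
   3 * (\<Sum>k\<in>configs. of_bool (cherry_edges k \<subseteq> G) * defects G k)"
proof -
  have rot: "(\<Sum>k\<in>configs. of_bool (cherry_edges k \<subseteq> G) * defects G (rot k)) =
      (\<Sum>k\<in>configs. of_bool (cherry_edges k \<subseteq> G) * defects G k)"
    using sum_configs_rot[of "\<lambda>k. of_bool (cherry_edges k \<subseteq> G) * defects G k"]
    by (simp add: cherry_edges_rot)
  have rot2: "(\<Sum>k\<in>configs. of_bool (cherry_edges k \<subseteq> G) * defects G (rot (rot k))) =
      (\<Sum>k\<in>configs. of_bool (cherry_edges k \<subseteq> G) * defects G (rot k))"
    using sum_configs_rot[of "\<lambda>k. of_bool (cherry_edges k \<subseteq> G) * defects G (rot k)"]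
    by (simp add: cherry_edges_rot)
  show ?thesis
    using rot rot2 by (simp add: all_defects_def distrib_left sum.distrib)
qed

lemma sum_edge_pair:
  assumes "G \<in> \<Omega>" "b < n" "c < n"
  shows "(\<Sum>y\<in>V. \<Sum>z\<in>V. edge G b y * edge G c z) = real (d b) * real (d c)"
  using assms by (simp add: sum_distrib_left[symmetric] sum_distrib_right[symmetric] sum_edge)

text \<open>Summing out the four leaves not involved in \<open>\<phi>\<close> costs a factor \<open>d\<^sub>a d\<^sub>b d\<^sub>c\<^sup>2 \<le> D\<^sup>2 d\<^sub>c\<^sup>2\<close>.\<close>
lemma sum_cherries_weighted_le:
  assumes G: "G \<in> \<Omega>" and \<phi>: "\<And>a b x y. 0 \<le> \<phi> a b x y"
  shows "(\<Sum>(a, b, c, x1, y1, y2, z1, z2, x2)\<in>configs.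
      of_bool (cherry_edges (a, b, c, x1, y1, y2, z1, z2, x2) \<subseteq> G) * \<phi> a b x1 y1)
    \<le> D ^ 2 * S * (\<Sum>a\<in>V. \<Sum>b\<in>V. \<Sum>x\<in>V. \<Sum>y\<in>V. edge G a x * edge G b y * \<phi> a b x y)"
proof -
  define \<Phi> where "\<Phi> a b = (\<Sum>x\<in>V. \<Sum>y\<in>V. edge G a x * edge G b y * \<phi> a b x y)" for a b
  have \<Phi>_nonneg: "0 \<le> \<Phi> a b" for a b
    unfolding \<Phi>_def using \<phi> by (intro sum_nonneg mult_nonneg_nonneg edge_nonneg)
  have "(\<Sum>(a, b, c, x1, y1, y2, z1, z2, x2)\<in>configs.
      of_bool (cherry_edges (a, b, c, x1, y1, y2, z1, z2, x2) \<subseteq> G) * \<phi> a b x1 y1)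
    = (\<Sum>a\<in>V. \<Sum>b\<in>V. \<Sum>c\<in>V. \<Sum>x1\<in>V. \<Sum>y1\<in>V. \<Sum>y2\<in>V. \<Sum>z1\<in>V. \<Sum>z2\<in>V. \<Sum>x2\<in>V.
      (edge G a x1 * edge G b y1 * \<phi> a b x1 y1) * (edge G b y2 * edge G c z1) * (edge G c z2 * edge G a x2))"
    unfolding sum_configs of_bool_cherry_edges by (intro sum.cong refl) (simp add: mult_ac)
  also have "\<dots> = (\<Sum>a\<in>V. \<Sum>b\<in>V. \<Sum>c\<in>V. \<Phi> a b * (real (d b) * real (d c)) * (real (d c) * real (d a)))"
    unfolding sum_mult3_nested \<Phi>_def using G by (simp add: sum_edge_pair)
  also have "\<dots> \<le> (\<Sum>a\<in>V. \<Sum>b\<in>V. \<Sum>c\<in>V. D ^ 2 * \<Phi> a b * real (d c) ^ 2)"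
  proof (intro sum_mono)
    fix a b c assume "a \<in> V" "b \<in> V" "c \<in> V"
    then have "real (d a) * real (d b) \<le> D ^ 2"
      using degree_le_D by (simp add: power2_eq_square mult_mono D_nonneg)
    then have "(real (d a) * real (d b)) * (\<Phi> a b * real (d c) ^ 2) \<le> D ^ 2 * (\<Phi> a b * real (d c) ^ 2)"
      using \<Phi>_nonneg by (intro mult_right_mono) auto
    then show "\<Phi> a b * (real (d b) * real (d c)) * (real (d c) * real (d a)) \<le> D ^ 2 * \<Phi> a b * real (d c) ^ 2"
      by (simp add: power2_eq_square mult_ac)
  qed
  also have "\<dots> = D ^ 2 * S * (\<Sum>a\<in>V. \<Sum>b\<in>V. \<Phi> a b)"
    by (simp only: sum_distrib_left[symmetric] sum_distrib_right[symmetric]) (simp add: S_def mult_ac)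
  finally show ?thesis
    by (simp add: \<Phi>_def)
qed

lemma weight_adjacent_centres:
  assumes G: "G \<in> \<Omega>"
  shows "(\<Sum>a\<in>V. \<Sum>b\<in>V. \<Sum>x\<in>V. \<Sum>y\<in>V. edge G a x * edge G b y * edge G a b) = edge_weight G"
  unfolding edge_weight_def
proof (intro sum.cong refl)
  fix a b assume "a \<in> V" "b \<in> V"
  then show "(\<Sum>x\<in>V. \<Sum>y\<in>V. edge G a x * edge G b y * edge G a b) = edge G a b * real (d a) * real (d b)"
    using sum_edge[OF G] by (simp only: sum_distrib_left[symmetric] sum_distrib_right[symmetric]) (simp add: mult_ac)
qed

lemma weight_equal_leaves:
  assumes G: "G \<in> \<Omega>"
  shows "(\<Sum>a\<in>V. \<Sum>b\<in>V. \<Sum>x\<in>V. \<Sum>y\<in>V. edge G a x * edge G b y * of_bool (x = y)) = S"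
proof -
  have "(\<Sum>a\<in>V. \<Sum>b\<in>V. \<Sum>x\<in>V. \<Sum>y\<in>V. edge G a x * edge G b y * of_bool (x = y)) =
      (\<Sum>a\<in>V. \<Sum>b\<in>V. \<Sum>x\<in>V. edge G a x * edge G b x)"
    by (intro sum.cong refl) (simp add: sum_of_bool_eq_mult mult.commute)
  also have "\<dots> = (\<Sum>x\<in>V. \<Sum>a\<in>V. \<Sum>b\<in>V. edge G a x * edge G b x)"
    by (rule sum_swap_inner3)
  also have "\<dots> = S"
    using G by (simp only: sum_distrib_left[symmetric] sum_distrib_right[symmetric])
      (simp add: S_def sum_edge' power2_eq_square)
  finally show ?thesis .
qed

lemma weight_adjacent_leaves:
  assumes G: "G \<in> \<Omega>"
  shows "(\<Sum>a\<in>V. \<Sum>b\<in>V. \<Sum>x\<in>V. \<Sum>y\<in>V. edge G a x * edge G b y * edge G x y) = edge_weight G"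
proof -
  have "(\<Sum>a\<in>V. \<Sum>b\<in>V. \<Sum>x\<in>V. \<Sum>y\<in>V. edge G a x * edge G b y * edge G x y) =
      (\<Sum>a\<in>V. \<Sum>x\<in>V. \<Sum>b\<in>V. \<Sum>y\<in>V. edge G a x * edge G b y * edge G x y)"
    by (intro sum.cong refl sum.swap)
  also have "\<dots> = (\<Sum>x\<in>V. \<Sum>a\<in>V. \<Sum>b\<in>V. \<Sum>y\<in>V. edge G a x * edge G b y * edge G x y)"
    by (rule sum.swap)
  also have "\<dots> = (\<Sum>x\<in>V. \<Sum>y\<in>V. \<Sum>a\<in>V. \<Sum>b\<in>V. edge G a x * edge G b y * edge G x y)"
    by (intro sum.cong refl sum_swap_inner3)
  also have "\<dots> = edge_weight G"
    unfolding edge_weight_def using G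
    by (simp only: sum_distrib_left[symmetric] sum_distrib_right[symmetric]) (simp add: sum_edge' mult_ac)
  finally show ?thesis .
qed

lemma sum_defects_le:
  assumes G: "G \<in> \<Omega>"
  shows "(\<Sum>k\<in>configs. of_bool (cherry_edges k \<subseteq> G) * defects G k) \<le> 2 * D ^ 2 * S * (edge_weight G + S)"
proof -
  let ?w = "\<lambda>\<phi>. \<Sum>(a, b, c, x1, y1, y2, z1, z2, x2)\<in>configs.
    of_bool (cherry_edges (a, b, c, x1, y1, y2, z1, z2, x2) \<subseteq> G) * \<phi> a b x1 y1"
  have swap: "(\<Sum>(a, b, c, x1, y1, y2, z1, z2, x2)\<in>configs.
      of_bool (cherry_edges (a, b, c, x1, y1, y2, z1, z2, x2) \<subseteq> G) * of_bool (x1 = y2)) =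
      ?w (\<lambda>a b x y. of_bool (x = y))"
    unfolding configs_def
    by (rule sum.reindex_bij_witness[where i = swap_b_leaves and j = swap_b_leaves]) (auto simp: edge_set_def)
  have "(\<Sum>k\<in>configs. of_bool (cherry_edges k \<subseteq> G) * defects G k) =
      ?w (\<lambda>a b x y. edge G a b) + ?w (\<lambda>a b x y. of_bool (x = y)) +
      (\<Sum>(a, b, c, x1, y1, y2, z1, z2, x2)\<in>configs.
        of_bool (cherry_edges (a, b, c, x1, y1, y2, z1, z2, x2) \<subseteq> G) * of_bool (x1 = y2)) +
      ?w (\<lambda>a b x y. edge G x y)"
    by (simp only: sum.distrib[symmetric], intro sum.cong refl, clarify) (simp add: edge_def algebra_simps)
  also have "\<dots> = ?w (\<lambda>a b x y. edge G a b) + ?w (\<lambda>a b x y. of_bool (x = y)) +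
      ?w (\<lambda>a b x y. of_bool (x = y)) + ?w (\<lambda>a b x y. edge G x y)"
    by (simp only: swap)
  also have "\<dots> \<le> D ^ 2 * S * edge_weight G + D ^ 2 * S * S + D ^ 2 * S * S + D ^ 2 * S * edge_weight G"
  proof -
    have "?w (\<lambda>a b x y. edge G a b) \<le> D ^ 2 * S * edge_weight G"
      unfolding weight_adjacent_centres[OF G, symmetric]
      by (rule sum_cherries_weighted_le[OF G]) (simp add: edge_nonneg)
    moreover have "?w (\<lambda>a b x y. of_bool (x = y))
        \<le> D ^ 2 * S * (\<Sum>a\<in>V. \<Sum>b\<in>V. \<Sum>x\<in>V. \<Sum>y\<in>V. edge G a x * edge G b y * of_bool (x = y))"
      by (rule sum_cherries_weighted_le[OF G]) simp
    moreover have "?w (\<lambda>a b x y. edge G x y) \<le> D ^ 2 * S * edge_weight G"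
      unfolding weight_adjacent_leaves[OF G, symmetric]
      by (rule sum_cherries_weighted_le[OF G]) (simp add: edge_nonneg)
    ultimately show ?thesis
      unfolding weight_equal_leaves[OF G] by (intro add_mono)
  qed
  also have "\<dots> = 2 * D ^ 2 * S * (edge_weight G + S)"
    by (simp add: algebra_simps)
  finally show ?thesis .
qed

definition ordered_triangle_set :: "nat set set \<Rightarrow> (nat \<times> nat \<times> nat) set" where
  "ordered_triangle_set G = {(a, b, c). {a, b} \<in> G \<and> {b, c} \<in> G \<and> {c, a} \<in> G}"

lemma ordered_triangles_eq_card:
  assumes G: "G \<in> \<Omega>"
  shows "ordered_triangles G = real (card (ordered_triangle_set G))"
proof -
  have "ordered_triangles G = (\<Sum>t\<in>V \<times> V \<times> V. of_bool (t \<in> ordered_triangle_set G))"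
    unfolding ordered_triangles_def ordered_triangle_set_def sum.cartesian_product
    by (intro sum.cong refl) (auto simp: edge_def)
  also have "\<dots> = real (card (V \<times> V \<times> V \<inter> ordered_triangle_set G))"
    by (simp add: sum_of_bool_eq del: mem_Collect_eq)
  also have "V \<times> V \<times> V \<inter> ordered_triangle_set G = ordered_triangle_set G"
    using edge_in_graph[OF G] by (auto simp: ordered_triangle_set_def)
  finally show ?thesis .
qed

lemma ordered_triangle_set_distinct:
  "G \<in> \<Omega> \<Longrightarrow> (a, b, c) \<in> ordered_triangle_set G \<Longrightarrow> a \<noteq> b \<and> b \<noteq> c \<and> c \<noteq> a"
  using edge_in_graph(3) by (auto simp: ordered_triangle_set_def)

lemma card_ordered_triangle_fibre:
  assumes G: "G \<in> \<Omega>" and t: "(a, b, c) \<in> ordered_triangle_set G"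
  shows "card {(x, y, z) \<in> ordered_triangle_set G. {x, y, z} = {a, b, c}} = 6"
proof -
  have "{(x, y, z) \<in> ordered_triangle_set G. {x, y, z} = {a, b, c}} =
      {(a, b, c), (a, c, b), (b, a, c), (b, c, a), (c, a, b), (c, b, a)}"
  proof (intro set_eqI iffI)
    fix t assume "t \<in> {(x, y, z) \<in> ordered_triangle_set G. {x, y, z} = {a, b, c}}"
    then obtain x y z where xyz: "t = (x, y, z)" "(x, y, z) \<in> ordered_triangle_set G" "{x, y, z} = {a, b, c}"
      by auto
    then have "x \<in> {a, b, c}" "y \<in> {a, b, c}" "z \<in> {a, b, c}"
      by blast+
    with ordered_triangle_set_distinct[OF G xyz(2)] show "t \<in> {(a, b, c), (a, c, b), (b, a, c), (b, c, a), (c, a, b), (c, b, a)}"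
      using xyz(1) by auto
  next
    fix t assume "t \<in> {(a, b, c), (a, c, b), (b, a, c), (b, c, a), (c, a, b), (c, b, a)}"
    then show "t \<in> {(x, y, z) \<in> ordered_triangle_set G. {x, y, z} = {a, b, c}}"
      using t by (auto simp: ordered_triangle_set_def insert_commute)
  qed
  then show ?thesis
    using ordered_triangle_set_distinct[OF G t] by simp
qed

lemma card_ordered_triangle_set:
  assumes G: "G \<in> \<Omega>"
  shows "card (ordered_triangle_set G) = 6 * triangles G"
proof -
  let ?T = "ordered_triangle_set G" and ?vertices = "\<lambda>(x, y, z). {x, y, z :: nat}"
  have "?T \<subseteq> V \<times> V \<times> V"
    using edge_in_graph[OF G] by (auto simp: ordered_triangle_set_def)
  then have "card ?T = (\<Sum>X\<in>?vertices ` ?T. card {t \<in> ?T. ?vertices t = X})"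
    using sum.image_gen[OF finite_subset, of ?T _ "\<lambda>_. 1::nat" ?vertices] by simp
  also have "\<dots> = (\<Sum>X\<in>?vertices ` ?T. 6)"
  proof (intro sum.cong refl)
    fix X assume "X \<in> ?vertices ` ?T"
    then obtain a b c where "(a, b, c) \<in> ?T" "X = {a, b, c}"
      by auto
    moreover have "{t \<in> ?T. ?vertices t = {a, b, c}} = {(x, y, z) \<in> ?T. {x, y, z} = {a, b, c}}"
      by auto
    ultimately show "card {t \<in> ?T. ?vertices t = X} = 6"
      using card_ordered_triangle_fibre[OF G] by simp
  qed
  also have "?vertices ` ?T = {T. \<exists>a b c. a \<noteq> b \<and> b \<noteq> c \<and> a \<noteq> c \<and> T = {a, b, c}
      \<and> {a, b} \<in> G \<and> {b, c} \<in> G \<and> {a, c} \<in> G}" (is "_ = ?Tri")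
  proof (intro set_eqI iffI)
    fix X assume "X \<in> ?vertices ` ?T"
    then obtain a b c where abc: "(a, b, c) \<in> ?T" and X: "X = {a, b, c}"
      by auto
    then have "a \<noteq> b" "b \<noteq> c" "a \<noteq> c" "{a, b} \<in> G" "{b, c} \<in> G" "{a, c} \<in> G"
      using ordered_triangle_set_distinct[OF G abc] by (auto simp: ordered_triangle_set_def insert_commute)
    with X show "X \<in> ?Tri"
      by blast
  next
    fix X assume "X \<in> ?Tri"
    then obtain a b c where "(a, b, c) \<in> ?T" "X = {a, b, c}"
      by (auto simp: ordered_triangle_set_def insert_commute)
    then show "X \<in> ?vertices ` ?T"
      by force
  qed
  finally show ?thesis
    by (simp add: triangles_def)
qed

lemma expected_triangles_eq:
  "expected_triangles n d = (\<Sum>G\<in>\<Omega>. ordered_triangles G) / (6 * real (card \<Omega>))"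
proof -
  have "(\<Sum>G\<in>\<Omega>. ordered_triangles G) = 6 * (\<Sum>G\<in>\<Omega>. real (triangles G))"
    by (simp add: sum_distrib_left ordered_triangles_eq_card card_ordered_triangle_set)
  then show ?thesis
    by (simp add: expected_triangles_def)
qed

lemma ordered_triangles_nonneg: "0 \<le> ordered_triangles G"
  by (simp add: ordered_triangles_def edge_def sum_nonneg)

lemma ordered_triangles_le:
  assumes G: "G \<in> \<Omega>"
  shows "ordered_triangles G \<le> real n * M"
proof -
  have "ordered_triangles G \<le> (\<Sum>a\<in>V. \<Sum>b\<in>V. \<Sum>c\<in>V. edge G a b)"
    unfolding ordered_triangles_def by (intro sum_mono) (simp add: edge_def)
  also have "\<dots> = real n * M"
    using sum_sum_edge[OF G] by (simp add: sum_distrib_left[symmetric])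
  finally show ?thesis .
qed

lemma sum_ordered_triangles_le:
  assumes m: "2 * (7 + D) * D \<le> M"
  shows "(\<Sum>G\<in>\<Omega>. ordered_triangles G) * (M - 2 * (7 + D) * D) ^ 3 \<le> real (card \<Omega>) * Q ^ 3"
proof -
  have "(\<Sum>G\<in>\<Omega>. ordered_triangles G) * (M - 2 * (7 + D) * D) ^ 3
      \<le> (\<Sum>G\<in>\<Omega>. \<Sum>k\<in>configs. of_bool (forward G k))"
    unfolding sum_distrib_right using m by (intro sum_mono forward_ge)
  also have "\<dots> = (\<Sum>G\<in>\<Omega>. \<Sum>k\<in>configs. of_bool (backward G k))"
    by (rule sum_forward_eq_sum_backward)
  also have "\<dots> \<le> (\<Sum>G\<in>\<Omega>. Q ^ 3)"
    using backward_le Q_distinct_le by (intro sum_mono) (meson order_trans)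
  finally show ?thesis
    by simp
qed

lemma sum_ordered_triangles_ge:
  "real (card \<Omega>) * (Q_distinct - 6 * D ^ 2 * S ^ 2) - 6 * D ^ 2 * S * (\<Sum>G\<in>\<Omega>. edge_weight G)
    \<le> (\<Sum>G\<in>\<Omega>. ordered_triangles G) * M ^ 3"
proof -
  have "real (card \<Omega>) * (Q_distinct - 6 * D ^ 2 * S ^ 2) - 6 * D ^ 2 * S * (\<Sum>G\<in>\<Omega>. edge_weight G)
      = (\<Sum>G\<in>\<Omega>. Q_distinct - 6 * D ^ 2 * S * (edge_weight G + S))"
    by (simp add: sum_subtractf sum.distrib sum_distrib_left algebra_simps power2_eq_square)
  also have "\<dots> \<le> (\<Sum>G\<in>\<Omega>. Q_distinct - (\<Sum>k\<in>configs. of_bool (cherry_edges k \<subseteq> G) * all_defects G k))"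
  proof (intro sum_mono diff_left_mono)
    fix G assume "G \<in> \<Omega>"
    then show "(\<Sum>k\<in>configs. of_bool (cherry_edges k \<subseteq> G) * all_defects G k) \<le> 6 * D ^ 2 * S * (edge_weight G + S)"
      unfolding sum_all_defects using sum_defects_le[OF \<open>G \<in> \<Omega>\<close>] by (simp add: mult_ac)
  qed
  also have "\<dots> \<le> (\<Sum>G\<in>\<Omega>. \<Sum>k\<in>configs. of_bool (backward G k))"
    by (intro sum_mono backward_ge)
  also have "\<dots> = (\<Sum>G\<in>\<Omega>. \<Sum>k\<in>configs. of_bool (forward G k))"
    by (rule sum_forward_eq_sum_backward[symmetric])
  also have "\<dots> \<le> (\<Sum>G\<in>\<Omega>. ordered_triangles G) * M ^ 3"
    unfolding sum_distrib_right by (intro sum_mono forward_le)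
  finally show ?thesis .
qed

lemma D_le_square:
  assumes "0 < M"
  shows "D \<le> D ^ 2"
proof -
  have "\<exists>v<n. d v \<noteq> 0"
  proof (rule ccontr)
    assume "\<not> (\<exists>v<n. d v \<noteq> 0)"
    then have "(\<Sum>v\<in>V. real (d v)) = 0" by simp
    with assms sum_degrees show False by simp
  qed
  then obtain v where "v < n" "d v \<noteq> 0"
    by blast
  then have "1 \<le> D"
    using degree_le_D[of v] by linarith
  then show ?thesis
    using mult_left_mono[of 1 D D] D_nonneg by (simp add: power2_eq_square)
qed

lemma card_graphs_pos: "graphical n d \<Longrightarrow> 0 < real (card \<Omega>)"
  by (simp add: graphical_def finite_graphs_deg card_gt_0_iff)

lemma expected_triangles_zero:
  assumes "M = 0"
  shows "expected_triangles n d = 0"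
proof -
  have "ordered_triangles G = 0" if "G \<in> \<Omega>" for G
    using ordered_triangles_le[OF that] ordered_triangles_nonneg[of G] assms by simp
  then show ?thesis
    by (simp add: expected_triangles_eq)
qed

lemma sum_edge_weight_le_small:
  assumes M: "0 < M" and r: "D ^ 2 / M \<le> 1 / 100"
  shows "M * (\<Sum>G\<in>\<Omega>. edge_weight G) \<le> 2 * real (card \<Omega>) * S ^ 2"
proof -
  have "D ^ 2 \<le> M / 100"
    using M r by (simp add: field_simps)
  moreover have "2 * (2 + D) * D = 4 * D + 2 * D ^ 2"
    by (simp add: algebra_simps power2_eq_square)
  ultimately have "M / 2 \<le> M - 2 * (2 + D) * D"
    using D_le_square[OF M] M by linarith
  moreover have "0 \<le> (\<Sum>G\<in>\<Omega>. edge_weight G)"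
    by (simp add: edge_weight_def edge_def sum_nonneg)
  ultimately have "M / 2 * (\<Sum>G\<in>\<Omega>. edge_weight G) \<le> (M - 2 * (2 + D) * D) * (\<Sum>G\<in>\<Omega>. edge_weight G)"
    by (rule mult_right_mono)
  then show ?thesis
    using sum_edge_weight_le by simp
qed

lemma expected_triangles_le:
  assumes graphical: "graphical n d" and r: "D ^ 2 / M \<le> 1 / 100"
  shows "expected_triangles n d \<le> Q ^ 3 / (6 * M ^ 3) / (1 - 16 * (D ^ 2 / M)) ^ 3"
proof (cases "M = 0")
  case False
  then have M: "0 < M" by (simp add: M_def)
  define r where "r = D ^ 2 / M"
  have D2: "D ^ 2 = r * M" and r1: "r \<le> 1 / 100"
    using M r by (simp_all add: r_def)
  have "2 * (7 + D) * D = 14 * D + 2 * D ^ 2"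
    by (simp add: algebra_simps power2_eq_square)
  then have "2 * (7 + D) * D \<le> 16 * r * M"
    using D_le_square[OF M] D2 by linarith
  then have m: "M * (1 - 16 * r) \<le> M - 2 * (7 + D) * D" "0 < 1 - 16 * r"
    using r1 by (simp_all add: algebra_simps)
  let ?T = "\<Sum>G\<in>\<Omega>. ordered_triangles G"
  have "?T * (M * (1 - 16 * r)) ^ 3 \<le> ?T * (M - 2 * (7 + D) * D) ^ 3"
    using m M by (intro mult_left_mono power_mono sum_nonneg ordered_triangles_nonneg) auto
  also have "\<dots> \<le> real (card \<Omega>) * Q ^ 3"
    using m mult_pos_pos[OF M m(2)] by (intro sum_ordered_triangles_le) linarith
  finally have "?T * M ^ 3 * (1 - 16 * r) ^ 3 \<le> real (card \<Omega>) * Q ^ 3"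
    by (simp add: power_mult_distrib mult.assoc)
  then show ?thesis
    unfolding expected_triangles_eq r_def[symmetric]
    using card_graphs_pos[OF graphical] M m(2) by (simp add: field_simps)
qed (simp add: expected_triangles_zero)

lemma defect_bound_le:
  assumes M: "0 < M" and r: "D ^ 2 / M \<le> 1 / 100" and QM: "M \<le> Q"
  shows "6 * D ^ 2 * S ^ 2 * real (card \<Omega>) + 6 * D ^ 2 * S * (\<Sum>G\<in>\<Omega>. edge_weight G)
    \<le> 120 * (D ^ 2 / M) * real (card \<Omega>) * Q ^ 3"
proof -
  define r where "r = D ^ 2 / M"
  have D2: "D ^ 2 = r * M" and r0: "0 \<le> r"
    using M by (simp_all add: r_def)
  have S: "0 \<le> S" "S \<le> 2 * Q"
    using QM M S_eq by simp_all
  let ?N = "real (card \<Omega>)" and ?W = "\<Sum>G\<in>\<Omega>. edge_weight G"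
  have "6 * D ^ 2 * S ^ 2 * ?N + 6 * D ^ 2 * S * ?W = 6 * r * S * (M * S * ?N + M * ?W)"
    unfolding D2 by (simp add: algebra_simps power2_eq_square)
  also have "\<dots> \<le> 6 * r * S * (M * S * ?N + 2 * ?N * S ^ 2)"
    using sum_edge_weight_le_small[OF M r] r0 S by (intro mult_left_mono add_left_mono) simp_all
  also have "\<dots> = 6 * r * ?N * S ^ 2 * (M + 2 * S)"
    by (simp add: algebra_simps power2_eq_square)
  also have "\<dots> \<le> 6 * r * ?N * (2 * Q) ^ 2 * (5 * Q)"
    using r0 S QM M by (intro mult_mono mult_left_mono power_mono) simp_all
  also have "\<dots> = 120 * r * ?N * Q ^ 3"
    by (simp add: power2_eq_square power3_eq_cube)
  finally show ?thesis
    by (simp add: r_def)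
qed

lemma expected_triangles_ge:
  assumes graphical: "graphical n d" and M12: "M1 n d \<le> M2 n d" and r: "D ^ 2 / M \<le> 1 / 100"
  shows "(1 - 123 * (D ^ 2 / M)) * (Q ^ 3 / (6 * M ^ 3)) \<le> expected_triangles n d"
proof (cases "M = 0")
  case False
  then have M: "0 < M" by (simp add: M_def)
  have QM: "M \<le> Q"
    using M12 by (simp add: M_def Q_def)
  define r where "r = D ^ 2 / M"
  have D2: "D ^ 2 = r * M" and r0: "0 \<le> r"
    using M by (simp_all add: r_def)
  let ?N = "real (card \<Omega>)"
  have "Q ^ 3 * (1 - 3 * r) \<le> Q_distinct"
  proof -
    have "3 * D ^ 2 * Q ^ 2 \<le> 3 * r * Q * Q ^ 2"
      using D2 r0 QM by (simp add: mult_left_mono mult_right_mono)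
    then show ?thesis
      using Q_distinct_ge by (simp add: algebra_simps power2_eq_square power3_eq_cube)
  qed
  then have "?N * (Q ^ 3 * (1 - 3 * r)) \<le> ?N * Q_distinct"
    by (intro mult_left_mono) simp_all
  then have "?N * (Q ^ 3 * (1 - 123 * r))
      \<le> ?N * (Q_distinct - 6 * D ^ 2 * S ^ 2) - 6 * D ^ 2 * S * (\<Sum>G\<in>\<Omega>. edge_weight G)"
    using defect_bound_le[OF M r QM] by (simp add: r_def[symmetric] algebra_simps)
  also have "\<dots> \<le> (\<Sum>G\<in>\<Omega>. ordered_triangles G) * M ^ 3"
    by (rule sum_ordered_triangles_ge)
  finally show ?thesis
    unfolding expected_triangles_eq r_def[symmetric]
    using card_graphs_pos[OF graphical] M by (simp add: field_simps)
qed (simp add: expected_triangles_eq sum_nonneg ordered_triangles_nonneg)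

end

section \<open>The expected number of triangles\<close>

lemma asymp_equiv_sandwich_factors:
  fixes f g l u :: "'a \<Rightarrow> real"
  assumes "(l \<longlongrightarrow> 1) F" "(u \<longlongrightarrow> 1) F"
    and "\<forall>\<^sub>F x in F. l x * g x \<le> f x \<and> f x \<le> u x * g x"
  shows "f \<sim>[F] g"
proof (rule asymp_equiv_sandwich_real)
  show "(\<lambda>x. l x * g x) \<sim>[F] g" "(\<lambda>x. u x * g x) \<sim>[F] g"
    using asymp_equiv_mult[OF tendsto_imp_asymp_equiv_const[OF assms(1)] asymp_equiv_refl[of g]]
      asymp_equiv_mult[OF tendsto_imp_asymp_equiv_const[OF assms(2)] asymp_equiv_refl[of g]]
    by simp_all
  show "\<forall>\<^sub>F x in F. f x \<in> {l x * g x..u x * g x}"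
    using assms(3) by simp
qed

theorem lemma5:
  fixes d :: "nat \<Rightarrow> nat \<Rightarrow> nat"
  assumes graphical: "\<And>n. graphical n (d n)"
    and small_max: "(\<lambda>n. real (dmax n (d n)) ^ 2) \<in> o(\<lambda>n. real (M1 n (d n)))"
    and M2_ge: "\<And>n. M2 n (d n) \<ge> M1 n (d n)"
  shows "(\<lambda>n. expected_triangles n (d n)) \<sim>[at_top]
         (\<lambda>n. real (M2 n (d n)) ^ 3 / (6 * real (M1 n (d n)) ^ 3))"
proof -
  define r where "r n = real (dmax n (d n)) ^ 2 / real (M1 n (d n))" for n
  define \<mu> where "\<mu> n = real (M2 n (d n)) ^ 3 / (6 * real (M1 n (d n)) ^ 3)" for n
  have r: "(r \<longlongrightarrow> 0) at_top"
    unfolding r_def by (rule smalloD_tendsto[OF small_max])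
  then have "\<forall>\<^sub>F n in at_top. r n < 1 / 100"
    by (rule order_tendstoD) simp
  then have "\<forall>\<^sub>F n in at_top. (1 - 123 * r n) * \<mu> n \<le> expected_triangles n (d n) \<and>
      expected_triangles n (d n) \<le> 1 / (1 - 16 * r n) ^ 3 * \<mu> n"
  proof (rule eventually_mono)
    fix n assume "r n < 1 / 100"
    then show "(1 - 123 * r n) * \<mu> n \<le> expected_triangles n (d n) \<and>
        expected_triangles n (d n) \<le> 1 / (1 - 16 * r n) ^ 3 * \<mu> n"
      using degree_sequence.expected_triangles_ge[OF graphical M2_ge, of n]
        degree_sequence.expected_triangles_le[OF graphical, of n]
      by (simp add: r_def \<mu>_def degree_sequence.D_def degree_sequence.M_def degree_sequence.Q_def mult_ac)
  qed
  moreover have "((\<lambda>n. 1 - 123 * r n) \<longlongrightarrow> 1) at_top" "((\<lambda>n. 1 / (1 - 16 * r n) ^ 3) \<longlongrightarrow> 1) at_top"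
    using r by (auto intro!: tendsto_eq_intros)
  ultimately show ?thesis
    unfolding \<mu>_def[symmetric] by (intro asymp_equiv_sandwich_factors)
qed

end
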